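(* For any poset $P$ on $\{1,2,\ldots,n\}$ and field $k$, the three rings $R_P$, $\mathfrak{gr}(R_P)$ and $S/I^{\mathrm{init}}_P$ share the same $\mathbb{N}^n$-graded Hilbert series, namely $\sum_{f\in\mathcal{A}^{\mathrm{weak}}(P)}\mathbf{x}^f$.
   Context: All posets are finite. $\mathcal{A}^{\mathrm{weak}}(P)$ is the set of maps $f:\{1,\ldots,n\}\to\mathbb{N}$ with $f(i)\ge f(j)$ whenever $i<_Pj$; $\mathbf{x}^f=\prod_ix_i^{f(i)}$. $R_P\subseteq k[x_1,\ldots,x_n]$ is the $k$-span of the $\mathbf{x}^f$, $f\in\mathcal{A}^{\mathrm{weak}}(P)$, $\mathbb{N}^n$-graded with $\mathbf{x}^f$ of degree $f$. $\mathfrak{m}$ is the ideal spanned by $\mathbf{x}^f$ with $f\ne0$, and $\mathfrak{gr}(R_P)=\bigoplus_i\mathfrak{m}^i/\mathfrak{m}^{i+1}$ with the induced $\mathbb{N}^n$-grading. A connected order ideal is a nonempty downward-closed subset whose induced Hasse diagram is connected; $\mathcal{J}_{\mathrm{conn}}(P)$ is the set of these. Two connected order ideals intersect nontrivially if they are neither disjoint nor nested; $\Pi(P)$ is the set of such unordered pairs. $S=k[U_J]_{J\in\mathcal{J}_{\mathrm{conn}}(P)}$, $\mathbb{N}^n$-graded with $U_J$ of degree the indicator vector $\chi_J$, and $I^{\mathrm{init}}_P$ is the ideal of $S$ generated by $U_{J_1}U_{J_2}$ for $\{J_1,J_2\}\in\Pi(P)$. *)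

theory Defs
  imports "HOL-Analysis.Analysis" "HOL-Library.Poly_Mapping" "HOL-Library.Groups_Big_Fun"
begin

(* Polynomials over the field 'k in variables indexed by 'v are
   finitely supported maps  ('v \<Rightarrow>\<^sub>0 nat) \<Rightarrow>\<^sub>0 'k  (monomial exponent \<mapsto> coefficient),
   with the convolution product of HOL-Library.Poly_Mapping. *)

type_synonym ('v, 'k) mpoly = "('v \<Rightarrow>\<^sub>0 nat) \<Rightarrow>\<^sub>0 'k"

definition psmult :: "'k::field \<Rightarrow> ('v, 'k) mpoly \<Rightarrow> ('v, 'k) mpoly" where
  "psmult c p = Poly_Mapping.map (\<lambda>a. c * a) p"

definition kspan :: "('v, 'k::field) mpoly set \<Rightarrow> ('v, 'k) mpoly set" where
  "kspan A = module.span psmult A"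

definition kdim :: "('v, 'k::field) mpoly set \<Rightarrow> nat" where
  "kdim A = vector_space.dim psmult A"

definition monom :: "('v \<Rightarrow>\<^sub>0 nat) \<Rightarrow> ('v, 'k::field) mpoly" where
  "monom f = Poly_Mapping.single f 1"

definition poset_on :: "nat \<Rightarrow> nat rel \<Rightarrow> bool" where
  "poset_on n r \<longleftrightarrow> r \<subseteq> {1..n} \<times> {1..n} \<and> partial_order_on {1..n} r"

definition strict_lt :: "nat rel \<Rightarrow> nat \<Rightarrow> nat \<Rightarrow> bool" where
  "strict_lt r i j \<longleftrightarrow> (i, j) \<in> r \<and> i \<noteq> j"

definition Aweak :: "nat \<Rightarrow> nat rel \<Rightarrow> (nat \<Rightarrow>\<^sub>0 nat) set" where
  "Aweak n r = {f. Poly_Mapping.keys f \<subseteq> {1..n} \<and>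
      (\<forall>i j. strict_lt r i j \<longrightarrow> Poly_Mapping.lookup f j \<le> Poly_Mapping.lookup f i)}"

definition RP :: "nat \<Rightarrow> nat rel \<Rightarrow> (nat, 'k::field) mpoly set" where
  "RP n r = kspan (monom ` Aweak n r)"

definition mideal :: "nat \<Rightarrow> nat rel \<Rightarrow> (nat, 'k::field) mpoly set" where
  "mideal n r = kspan (monom ` (Aweak n r - {0}))"

fun mpow :: "nat \<Rightarrow> nat rel \<Rightarrow> nat \<Rightarrow> (nat, 'k::field) mpoly set" where
  "mpow n r 0 = RP n r"
| "mpow n r (Suc i) = kspan {a * b | a b. a \<in> mideal n r \<and> b \<in> mpow n r i}"

definition compR :: "(nat, 'k::field) mpoly set \<Rightarrow> (nat \<Rightarrow>\<^sub>0 nat) \<Rightarrow> (nat, 'k) mpoly set" where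
  "compR V f = {p \<in> V. Poly_Mapping.keys p \<subseteq> {f}}"

definition hilb_RP :: "'k::field itself \<Rightarrow> nat \<Rightarrow> nat rel \<Rightarrow> (nat \<Rightarrow>\<^sub>0 nat) \<Rightarrow> nat" where
  "hilb_RP _ n r f = kdim (compR (RP n r :: (nat, 'k) mpoly set) f)"

(* Hilbert function of gr(R_P) = \<Oplus>_i m^i/m^{i+1}; the degree-f part of m^i/m^{i+1} is
   (m^i)_f/(m^{i+1})_f, whose dimension is dim (m^i)_f - dim (m^{i+1})_f *)
definition hilb_gr :: "'k::field itself \<Rightarrow> nat \<Rightarrow> nat rel \<Rightarrow> (nat \<Rightarrow>\<^sub>0 nat) \<Rightarrow> nat" where
  "hilb_gr _ n r f = Sum_any (\<lambda>i. kdim (compR (mpow n r i :: (nat, 'k) mpoly set) f)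
                           - kdim (compR (mpow n r (Suc i) :: (nat, 'k) mpoly set) f))"

definition down_closed :: "nat rel \<Rightarrow> nat set \<Rightarrow> bool" where
  "down_closed r J \<longleftrightarrow> (\<forall>i j. j \<in> J \<and> (i, j) \<in> r \<longrightarrow> i \<in> J)"

definition cover_in :: "nat rel \<Rightarrow> nat set \<Rightarrow> nat \<Rightarrow> nat \<Rightarrow> bool" where
  "cover_in r J i j \<longleftrightarrow> i \<in> J \<and> j \<in> J \<and> strict_lt r i j \<and>
      \<not> (\<exists>k\<in>J. strict_lt r i k \<and> strict_lt r k j)"

definition hasse_connected :: "nat rel \<Rightarrow> nat set \<Rightarrow> bool" where
  "hasse_connected r J \<longleftrightarrow>
     (\<forall>a\<in>J. \<forall>b\<in>J. (a, b) \<in> {(i, j). cover_in r J i j \<or> cover_in r J j i}\<^sup>*)"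

definition Jconn :: "nat \<Rightarrow> nat rel \<Rightarrow> nat set set" where
  "Jconn n r = {J. J \<subseteq> {1..n} \<and> J \<noteq> {} \<and> down_closed r J \<and> hasse_connected r J}"

definition Pi_pairs :: "nat \<Rightarrow> nat rel \<Rightarrow> nat set set set" where
  "Pi_pairs n r = {{J1, J2} | J1 J2. J1 \<in> Jconn n r \<and> J2 \<in> Jconn n r \<and>
      J1 \<inter> J2 \<noteq> {} \<and> \<not> J1 \<subseteq> J2 \<and> \<not> J2 \<subseteq> J1}"

definition Sring :: "nat \<Rightarrow> nat rel \<Rightarrow> (nat set, 'k::field) mpoly set" where
  "Sring n r = {p. \<forall>a\<in>Poly_Mapping.keys p. Poly_Mapping.keys a \<subseteq> Jconn n r}"

definition Uvar :: "nat set \<Rightarrow> (nat set, 'k::field) mpoly" where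
  "Uvar J = monom (Poly_Mapping.single J 1)"

definition Iinit :: "nat \<Rightarrow> nat rel \<Rightarrow> (nat set, 'k::field) mpoly set" where
  "Iinit n r = kspan {s * (Uvar J1 * Uvar J2) | s J1 J2.
      s \<in> Sring n r \<and> {J1, J2} \<in> Pi_pairs n r}"

(* N^n-degree of a monomial \<Prod> U_J^{a_J}: \<Sum>_J a_J \<chi>_J *)
definition Sdeg :: "(nat set \<Rightarrow>\<^sub>0 nat) \<Rightarrow> (nat \<Rightarrow>\<^sub>0 nat)" where
  "Sdeg a = (\<Sum>J\<in>Poly_Mapping.keys a. \<Sum>i\<in>J. Poly_Mapping.single i (Poly_Mapping.lookup a J))"

definition compS :: "(nat set, 'k::field) mpoly set \<Rightarrow> (nat \<Rightarrow>\<^sub>0 nat) \<Rightarrow> (nat set, 'k) mpoly set" where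
  "compS V f = {p \<in> V. \<forall>a\<in>Poly_Mapping.keys p. Sdeg a = f}"

definition hilb_SI :: "'k::field itself \<Rightarrow> nat \<Rightarrow> nat rel \<Rightarrow> (nat \<Rightarrow>\<^sub>0 nat) \<Rightarrow> nat" where
  "hilb_SI _ n r f = kdim (compS (Sring n r :: (nat set, 'k) mpoly set) f)
                     - kdim (compS (Iinit n r :: (nat set, 'k) mpoly set) f)"

end

theory Submission
  imports Defs
begin

text \<open>
  All three Hilbert functions are computed one monomial at a time. \<open>R_P\<close> and every power
  \<open>m^i\<close> are spanned by monomials, so each graded piece has dimension 0 or 1; in degree \<open>f\<close>
  the decreasing filtration by the \<open>m^i\<close> vanishes beyond the total degree of \<open>f\<close>, so the
  dimensions of the pieces of \<open>gr(R_P)\<close> telescope to \<open>dim (R_P)_f\<close>.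

  In \<open>S\<close> both \<open>S\<close> and \<open>I^init_P\<close> are spanned by monomials \<open>\<Prod> U_J^a_J\<close> of degree
  \<open>\<Sum> a_J \<chi>_J\<close>, and such a monomial lies in \<open>I^init_P\<close> exactly when its support is not a
  laminar family. So \<open>S/I^init_P\<close> counts laminar decompositions \<open>f = \<Sum> a_J \<chi>_J\<close> into
  connected order ideals. Such a decomposition exists iff \<open>f \<in> A^weak(P)\<close>: peel off \<open>\<chi>_C\<close>
  for a connected component \<open>C\<close> of the support of \<open>f\<close> in the comparability graph and
  recurse. It is unique, because a maximal member of a laminar decomposition is such a
  component.
\<close>

section \<open>Subspaces spanned by monomials\<close>

lemma lookup_psmult [simp]: "Poly_Mapping.lookup (psmult c p) k = c * Poly_Mapping.lookup p k"
  by (simp add: psmult_def map.rep_eq when_def)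

lemma lookup_monom: "Poly_Mapping.lookup (monom g :: ('v, 'k::field) mpoly) h = (if h = g then 1 else 0)"
  by (simp add: monom_def lookup_single when_def)

lemma keys_monom [simp]: "Poly_Mapping.keys (monom g :: ('v, 'k::field) mpoly) = {g}"
  by (simp add: monom_def)

lemma monom_mult: "(monom g * monom h :: ('v, 'k::field) mpoly) = monom (g + h)"
  by (simp add: monom_def mult_single)

lemma monom_eq_iff [simp]: "(monom g :: ('v, 'k::field) mpoly) = monom h \<longleftrightarrow> g = h"
  by (metis keys_monom singleton_inject)

lemma inj_monom: "inj (monom :: _ \<Rightarrow> ('v, 'k::field) mpoly)"
  by (simp add: inj_def)

interpretation vs: vector_space "psmult :: 'k::field \<Rightarrow> ('v, 'k) mpoly \<Rightarrow> _"
  by unfold_locales (auto intro!: poly_mapping_eqI simp: lookup_add algebra_simps)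

lemma kspan_eq_span: "kspan = vs.span"
  by (simp add: kspan_def fun_eq_iff)

lemma kdim_eq_dim: "kdim = vs.dim"
  by (simp add: kdim_def fun_eq_iff)

definition supported_in :: "('v \<Rightarrow>\<^sub>0 nat) set \<Rightarrow> ('v, 'k::field) mpoly set" where
  "supported_in G = {p. Poly_Mapping.keys p \<subseteq> G}"

lemma keys_psmult_subset: "Poly_Mapping.keys (psmult c p) \<subseteq> Poly_Mapping.keys p"
  by (auto simp: in_keys_iff)

lemma subspace_supported_in: "vs.subspace (supported_in G :: ('v, 'k::field) mpoly set)"
  unfolding vs.subspace_def supported_in_def
proof (intro conjI ballI allI; simp)
  fix p q :: "('v, 'k) mpoly"
  assume "Poly_Mapping.keys p \<subseteq> G" "Poly_Mapping.keys q \<subseteq> G"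
  then show "Poly_Mapping.keys (p + q) \<subseteq> G"
    using keys_add[of p q] by blast
next
  fix c and p :: "('v, 'k) mpoly"
  assume "Poly_Mapping.keys p \<subseteq> G"
  then show "Poly_Mapping.keys (psmult c p) \<subseteq> G"
    using keys_psmult_subset[of c p] by blast
qed

lemma monom_in_supported_in [simp]: "monom g \<in> supported_in G \<longleftrightarrow> g \<in> G"
  by (simp add: supported_in_def)

lemma mult_in_supported_in:
  assumes "p \<in> supported_in G" "q \<in> supported_in H" "\<And>g h. g \<in> G \<Longrightarrow> h \<in> H \<Longrightarrow> g + h \<in> K"
  shows "p * q \<in> supported_in K"
  using keys_mult[of p q] assms by (fastforce simp: supported_in_def)

lemma poly_eq_sum_monoms:
  "p = (\<Sum>g\<in>Poly_Mapping.keys p. psmult (Poly_Mapping.lookup p g) (monom g))"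
  by (rule poly_mapping_eqI)
     (simp add: lookup_sum lookup_monom if_distrib sum.delta in_keys_iff cong: if_cong)

lemma span_monoms: "vs.span (monom ` G) = (supported_in G :: ('v, 'k::field) mpoly set)"
proof
  show "vs.span (monom ` G) \<subseteq> (supported_in G :: ('v, 'k) mpoly set)"
    by (rule vs.span_minimal[OF _ subspace_supported_in]) auto
  show "(supported_in G :: ('v, 'k) mpoly set) \<subseteq> vs.span (monom ` G)"
  proof
    fix p :: "('v, 'k) mpoly" assume "p \<in> supported_in G"
    then have "(\<Sum>g\<in>Poly_Mapping.keys p. psmult (Poly_Mapping.lookup p g) (monom g)) \<in> vs.span (monom ` G)"
      by (intro vs.span_sum vs.span_scale vs.span_base) (auto simp: supported_in_def)
    then show "p \<in> vs.span (monom ` G)"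
      by (simp flip: poly_eq_sum_monoms)
  qed
qed

lemma independent_monoms: "vs.independent (monom ` G :: ('v, 'k::field) mpoly set)"
  unfolding vs.independent_explicit_module
proof (intro allI impI)
  fix t u and v :: "('v, 'k) mpoly"
  assume t: "finite t" "t \<subseteq> monom ` G" and zero: "(\<Sum>v\<in>t. psmult (u v) v) = 0" and v: "v \<in> t"
  then obtain g where g: "v = monom g" by auto
  have "0 = Poly_Mapping.lookup (\<Sum>w\<in>t. psmult (u w) w) g"
    by (simp add: zero)
  also have "\<dots> = (\<Sum>w\<in>t. if w = v then u w else 0)"
    unfolding lookup_sum lookup_psmult
    by (rule sum.cong) (use t g in \<open>auto simp: lookup_monom\<close>)
  also have "\<dots> = u v"
    using t v by simp
  finally show "u v = 0" by simp
qed

lemma dim_supported_in: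
  "finite G \<Longrightarrow> vs.dim (supported_in G :: ('v, 'k::field) mpoly set) = card G"
  using vs.dim_span_eq_card_independent[OF independent_monoms, of G]
  by (simp add: span_monoms card_image inj_on_subset[OF inj_monom])

lemma dim_subspace_of_monomial_line:
  assumes W: "vs.subspace W" "W \<subseteq> (supported_in {g} :: ('v, 'k::field) mpoly set)"
  shows "vs.dim W = (if monom g \<in> W then 1 else 0)"
proof -
  have line: "p = psmult (Poly_Mapping.lookup p g) (monom g)" if "p \<in> supported_in {g}" for p :: "('v, 'k) mpoly"
    using that by (intro poly_mapping_eqI) (auto simp: supported_in_def lookup_monom in_keys_iff)
  show ?thesis
  proof (cases "monom g \<in> W")
    case True
    have "supported_in {g} \<subseteq> W"
    proof
      fix p :: "('v, 'k) mpoly" assume "p \<in> supported_in {g}"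
      then show "p \<in> W"
        using line vs.subspace_scale[OF W(1) True] by metis
    qed
    then have "W = supported_in {g}"
      using W(2) by blast
    then show ?thesis
      using True dim_supported_in[of "{g}"] by simp
  next
    case False
    have "p = 0" if p: "p \<in> W" for p :: "('v, 'k) mpoly"
    proof (rule ccontr)
      define c where "c = Poly_Mapping.lookup p g"
      have p_eq: "p = psmult c (monom g)"
        unfolding c_def using line W(2) p by blast
      assume "p \<noteq> 0"
      then have "c \<noteq> 0"
        using p_eq by auto
      then have "psmult (inverse c) p = monom g"
        using p_eq by simp
      then show False
        using vs.subspace_scale[OF W(1) p] False by metis
    qed
    then have "W \<subseteq> vs.span {}"
      by auto
    then show ?thesis
      using False vs.dim_le_card[of W "{}"] by simp
  qed
qed

lemma kdim_graded_component:
  assumes "vs.subspace V"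
  shows "kdim (compR V f :: (nat, 'k::field) mpoly set) = (if monom f \<in> V then 1 else 0)"
proof -
  have "compR V f = V \<inter> supported_in {f}"
    by (auto simp: compR_def supported_in_def)
  moreover have "vs.subspace (V \<inter> supported_in {f})"
    using assms subspace_supported_in by (rule vs.subspace_inter)
  ultimately show ?thesis
    using dim_subspace_of_monomial_line[of "V \<inter> supported_in {f}" f] by (simp add: kdim_eq_dim)
qed

section \<open>The rings \<open>R_P\<close> and \<open>gr(R_P)\<close>\<close>

definition total_degree :: "('v \<Rightarrow>\<^sub>0 nat) \<Rightarrow> nat" where
  "total_degree g = Sum_any (Poly_Mapping.lookup g)"

lemma total_degree_add: "total_degree (g + h) = total_degree g + total_degree h"
  unfolding total_degree_def lookup_add
  by (rule Sum_any.distrib) (simp_all flip: keys.rep_eq)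

lemma total_degree_pos_iff [simp]: "0 < total_degree g \<longleftrightarrow> g \<noteq> 0"
proof -
  have "total_degree g = 0 \<longleftrightarrow> g = 0"
    by (simp add: total_degree_def poly_mapping_eq_iff fun_eq_iff flip: keys.rep_eq)
  then show ?thesis
    by (simp add: zero_less_iff_neq_zero)
qed

lemma lookup_le_total_degree: "Poly_Mapping.lookup g x \<le> total_degree g"
proof (cases "x \<in> Poly_Mapping.keys g")
  case True
  have "total_degree g = (\<Sum>y\<in>Poly_Mapping.keys g. Poly_Mapping.lookup g y)"
    unfolding total_degree_def by (rule Sum_any.expand_superset) (auto simp: in_keys_iff)
  then show ?thesis
    using True by (simp add: member_le_sum)
qed (simp add: in_keys_iff)

lemma Sum_any_telescope:
  fixes d :: "nat \<Rightarrow> nat"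
  assumes antimono: "\<And>i. d (Suc i) \<le> d i" and vanish: "d N = 0"
  shows "Sum_any (\<lambda>i. d i - d (Suc i)) = d 0"
proof -
  have decreasing: "d j \<le> d i" if "i \<le> j" for i j
    using that by (induction j) (auto simp: le_Suc_eq intro: order_trans[OF antimono])
  have "{i. d i - d (Suc i) \<noteq> 0} \<subseteq> {..<N}"
  proof
    fix i assume "i \<in> {i. d i - d (Suc i) \<noteq> 0}"
    then show "i \<in> {..<N}"
      using decreasing[of N i] vanish by (cases "i < N") auto
  qed
  then have "Sum_any (\<lambda>i. d i - d (Suc i)) = (\<Sum>i<N. d i - d (Suc i))"
    by (rule Sum_any.expand_superset[OF finite_lessThan])
  also have "(\<Sum>i<M. d i - d (Suc i)) = d 0 - d M" for M
  proof (induction M)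
    case (Suc M)
    then show ?case
      using decreasing[of 0 M] antimono[of M] by simp
  qed simp
  finally show ?thesis
    using vanish by simp
qed

lemma Aweak_add: "f \<in> Aweak n r \<Longrightarrow> g \<in> Aweak n r \<Longrightarrow> f + g \<in> Aweak n r"
  unfolding Aweak_def using keys_add[of f g] by (auto simp: lookup_add add_mono)

lemma RP_eq: "RP n r = supported_in (Aweak n r)"
  by (simp add: RP_def kspan_eq_span span_monoms)

lemma mideal_eq: "mideal n r = supported_in (Aweak n r - {0})"
  by (simp add: mideal_def kspan_eq_span span_monoms)

lemma subspace_mpow: "vs.subspace (mpow n r i)"
  by (cases i) (auto simp: RP_def kspan_eq_span)

lemma mpow_Suc_subset: "mpow n r (Suc i) \<subseteq> mpow n r i"
proof (induction i)
  case 0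
  have "{a * b |a b. a \<in> mideal n r \<and> b \<in> RP n r} \<subseteq> RP n r"
    unfolding RP_eq mideal_eq by (auto intro!: mult_in_supported_in Aweak_add)
  then show ?case
    unfolding mpow.simps kspan_eq_span
    by (rule vs.span_minimal) (simp add: RP_eq subspace_supported_in)
next
  case (Suc i)
  then show ?case
    unfolding mpow.simps(2)[of n r "Suc i"] mpow.simps(2)[of n r i] kspan_eq_span
    by (intro vs.span_mono) blast
qed

lemma mpow_subset_total_degree:
  "(mpow n r i :: (nat, 'k::field) mpoly set) \<subseteq> supported_in {g. i \<le> total_degree g}"
proof (induction i)
  case (Suc i)
  have "a * b \<in> supported_in {g. Suc i \<le> total_degree g}"
    if "a \<in> mideal n r" "b \<in> mpow n r i" for a b :: "(nat, 'k) mpoly"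
  proof (rule mult_in_supported_in)
    show "a \<in> supported_in (Aweak n r - {0})"
      using that(1) by (simp add: mideal_eq)
    show "b \<in> supported_in {g. i \<le> total_degree g}"
      using that(2) Suc.IH by blast
    show "g + h \<in> {g. Suc i \<le> total_degree g}"
      if "g \<in> Aweak n r - {0}" "h \<in> {g. i \<le> total_degree g}" for g h
    proof -
      have "total_degree g \<noteq> 0"
        using that(1) by simp
      then show ?thesis
        using that(2) unfolding mem_Collect_eq total_degree_add by linarith
    qed
  qed
  then show ?case
    unfolding mpow.simps kspan_eq_span
    by (intro vs.span_minimal subspace_supported_in) blast
qed (auto simp: supported_in_def)

lemma hilb_RP_eq: "hilb_RP TYPE('k::field) n r f = (if f \<in> Aweak n r then 1 else 0)"
  using kdim_graded_component[OF subspace_supported_in, of "Aweak n r" f]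
  by (simp add: hilb_RP_def RP_eq)

lemma hilb_gr_eq: "hilb_gr TYPE('k::field) n r f = (if f \<in> Aweak n r then 1 else 0)"
proof -
  define d where "d i = (if (monom f :: (nat, 'k) mpoly) \<in> mpow n r i then 1 else 0 :: nat)" for i
  have "hilb_gr TYPE('k) n r f = Sum_any (\<lambda>i. d i - d (Suc i))"
    by (simp only: hilb_gr_def kdim_graded_component[OF subspace_mpow] d_def)
  also have "\<dots> = d 0"
  proof (rule Sum_any_telescope)
    show "d (Suc i) \<le> d i" for i
      using mpow_Suc_subset[of n r i] by (auto simp: d_def)
    show "d (Suc (total_degree f)) = 0"
      using mpow_subset_total_degree[of n r "Suc (total_degree f)"] by (auto simp: d_def)
  qed
  finally show ?thesis
    by (simp add: d_def RP_eq)
qed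

section \<open>Laminar decompositions into connected order ideals\<close>

lemma keys_add_nat [simp]: "Poly_Mapping.keys (g + h :: 'a \<Rightarrow>\<^sub>0 nat) = Poly_Mapping.keys g \<union> Poly_Mapping.keys h"
  by (auto simp: in_keys_iff lookup_add)

definition laminar :: "'a set set \<Rightarrow> bool" where
  "laminar K \<longleftrightarrow> (\<forall>J1\<in>K. \<forall>J2\<in>K. J1 \<inter> J2 = {} \<or> J1 \<subseteq> J2 \<or> J2 \<subseteq> J1)"

lemma laminar_subset: "laminar K \<Longrightarrow> K' \<subseteq> K \<Longrightarrow> laminar K'"
  unfolding laminar_def by blast

lemma laminar_insert:
  assumes "laminar K" "\<And>J. J \<in> K \<Longrightarrow> J \<inter> C \<noteq> {} \<Longrightarrow> J \<subseteq> C"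
  shows "laminar (insert C K)"
  unfolding laminar_def
proof (intro ballI)
  fix J1 J2 assume "J1 \<in> insert C K" "J2 \<in> insert C K"
  then consider "J1 = C" "J2 = C" | "J1 = C" "J2 \<in> K" | "J1 \<in> K" "J2 = C" | "J1 \<in> K" "J2 \<in> K"
    by blast
  then show "J1 \<inter> J2 = {} \<or> J1 \<subseteq> J2 \<or> J2 \<subseteq> J1"
  proof cases
    case 2
    then show ?thesis
      using assms(2)[of J2] by blast
  next
    case 3
    then show ?thesis
      using assms(2)[of J1] by blast
  next
    case 4
    then show ?thesis
      using assms(1) by (simp add: laminar_def)
  qed simp
qed

definition chi :: "'a set \<Rightarrow> 'a \<Rightarrow>\<^sub>0 nat" where
  "chi C = (\<Sum>i\<in>C. Poly_Mapping.single i 1)"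

lemma lookup_chi: "finite C \<Longrightarrow> Poly_Mapping.lookup (chi C) x = (if x \<in> C then 1 else 0)"
  by (simp add: chi_def lookup_sum lookup_single when_def)

lemma Sdeg_superset:
  assumes "finite K" "Poly_Mapping.keys g \<subseteq> K"
  shows "Sdeg g = (\<Sum>J\<in>K. \<Sum>i\<in>J. Poly_Mapping.single i (Poly_Mapping.lookup g J))"
  unfolding Sdeg_def using assms by (intro sum.mono_neutral_left) (auto simp: in_keys_iff)

lemma Sdeg_add: "Sdeg (g + h) = Sdeg g + Sdeg h"
proof -
  let ?K = "Poly_Mapping.keys g \<union> Poly_Mapping.keys h"
  show ?thesis
    using Sdeg_superset[of ?K "g + h"] Sdeg_superset[of ?K g] Sdeg_superset[of ?K h]
    by (simp add: lookup_add single_add sum.distrib)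
qed

lemma Sdeg_single: "Sdeg (Poly_Mapping.single C 1) = chi C"
  by (simp add: Sdeg_def chi_def)

lemma lookup_Sdeg:
  assumes "\<And>J. J \<in> Poly_Mapping.keys g \<Longrightarrow> finite J"
  shows "Poly_Mapping.lookup (Sdeg g) x =
           (\<Sum>J\<in>Poly_Mapping.keys g. if x \<in> J then Poly_Mapping.lookup g J else 0)"
  unfolding Sdeg_def lookup_sum lookup_single
  by (rule sum.cong) (simp_all add: assms when_def sum.delta)

lemma lookup_le_lookup_Sdeg:
  assumes "\<And>J. J \<in> Poly_Mapping.keys g \<Longrightarrow> finite J" "x \<in> J"
  shows "Poly_Mapping.lookup g J \<le> Poly_Mapping.lookup (Sdeg g) x"
proof (cases "J \<in> Poly_Mapping.keys g")
  case True
  then have "Poly_Mapping.lookup g J \<le>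
      (\<Sum>J\<in>Poly_Mapping.keys g. if x \<in> J then Poly_Mapping.lookup g J else 0)"
    using member_le_sum[of J "Poly_Mapping.keys g" "\<lambda>J. if x \<in> J then Poly_Mapping.lookup g J else 0"]
    by (simp add: assms(2))
  then show ?thesis
    using lookup_Sdeg[OF assms(1)] by simp
qed (simp add: in_keys_iff)

lemma keys_Sdeg:
  assumes "\<And>J. J \<in> Poly_Mapping.keys g \<Longrightarrow> finite J"
  shows "Poly_Mapping.keys (Sdeg g) = \<Union>(Poly_Mapping.keys g)"
proof -
  have "x \<in> Poly_Mapping.keys (Sdeg g) \<longleftrightarrow> (\<exists>J\<in>Poly_Mapping.keys g. x \<in> J)" for x
    using lookup_Sdeg[OF assms, where x = x] by (simp add: in_keys_iff sum_eq_0_iff)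
  then show ?thesis
    by blast
qed

lemma Jconn_finite: "J \<in> Jconn n r \<Longrightarrow> finite J"
  by (auto simp: Jconn_def intro: finite_subset)

lemma Sdeg_antitone:
  assumes "\<And>J. J \<in> Poly_Mapping.keys g \<Longrightarrow> finite J"
    and "\<And>J. J \<in> Poly_Mapping.keys g \<Longrightarrow> down_closed r J"
    and "(i, j) \<in> r"
  shows "Poly_Mapping.lookup (Sdeg g) j \<le> Poly_Mapping.lookup (Sdeg g) i"
proof -
  have "(\<Sum>J\<in>Poly_Mapping.keys g. if j \<in> J then Poly_Mapping.lookup g J else 0)
      \<le> (\<Sum>J\<in>Poly_Mapping.keys g. if i \<in> J then Poly_Mapping.lookup g J else 0)"
  proof (rule sum_mono)
    fix J assume "J \<in> Poly_Mapping.keys g"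
    then have "j \<in> J \<Longrightarrow> i \<in> J"
      using assms(2,3) by (auto simp: down_closed_def)
    then show "(if j \<in> J then Poly_Mapping.lookup g J else 0) \<le> (if i \<in> J then Poly_Mapping.lookup g J else 0)"
      by auto
  qed
  then show ?thesis
    using lookup_Sdeg[OF assms(1)] by simp
qed

lemma Sdeg_in_Aweak:
  assumes "Poly_Mapping.keys g \<subseteq> Jconn n r"
  shows "Sdeg g \<in> Aweak n r"
proof -
  have finite: "\<And>J. J \<in> Poly_Mapping.keys g \<Longrightarrow> finite J"
    using assms Jconn_finite by blast
  have "Poly_Mapping.keys (Sdeg g) \<subseteq> {1..n}"
    using assms by (auto simp: keys_Sdeg[OF finite] Jconn_def)
  moreover have "Poly_Mapping.lookup (Sdeg g) j \<le> Poly_Mapping.lookup (Sdeg g) i"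
    if "strict_lt r i j" for i j
    using that assms by (intro Sdeg_antitone[OF finite]) (auto simp: strict_lt_def Jconn_def)
  ultimately show ?thesis
    by (simp add: Aweak_def)
qed

definition hasse_graph :: "nat rel \<Rightarrow> nat set \<Rightarrow> nat rel" where
  "hasse_graph r J = {(i, j). cover_in r J i j \<or> cover_in r J j i}"

lemma hasse_connected_iff: "hasse_connected r J \<longleftrightarrow> (\<forall>a\<in>J. \<forall>b\<in>J. (a, b) \<in> (hasse_graph r J)\<^sup>*)"
  by (simp add: hasse_connected_def hasse_graph_def)

lemma hasse_graph_comparable: "(a, b) \<in> hasse_graph r J \<Longrightarrow> b \<in> J \<and> ((a, b) \<in> r \<or> (b, a) \<in> r)"
  by (auto simp: hasse_graph_def cover_in_def strict_lt_def)

lemma sym_rtrancl_hasse_graph: "sym ((hasse_graph r J)\<^sup>*)"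
  by (rule sym_rtrancl) (auto simp: sym_def hasse_graph_def)

definition comparability_closed :: "nat rel \<Rightarrow> nat set \<Rightarrow> nat set \<Rightarrow> bool" where
  "comparability_closed r U W \<longleftrightarrow> (\<forall>u\<in>W. \<forall>v\<in>U. (u, v) \<in> r \<or> (v, u) \<in> r \<longrightarrow> v \<in> W)"

lemma hasse_connected_subset_if_meets:
  assumes "hasse_connected r J" "J \<subseteq> U" "comparability_closed r U W" "x \<in> J" "x \<in> W"
  shows "J \<subseteq> W"
proof
  fix y assume "y \<in> J"
  then have "(x, y) \<in> (hasse_graph r J)\<^sup>*"
    using assms(1,4) by (simp add: hasse_connected_iff)
  then show "y \<in> W"
  proof (induction rule: rtrancl_induct)
    case (step y z)
    have "z \<in> U" "(y, z) \<in> r \<or> (z, y) \<in> r"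
      using hasse_graph_comparable[OF step.hyps(2)] assms(2) by auto
    with step.IH assms(3) show ?case
      unfolding comparability_closed_def by blast
  qed (rule assms(5))
qed

lemma poset_on_trans: "poset_on n r \<Longrightarrow> trans r"
  by (simp add: poset_on_def partial_order_on_def preorder_on_def)

lemma poset_on_antisym: "poset_on n r \<Longrightarrow> antisym r"
  by (simp add: poset_on_def partial_order_on_def)

lemma rtrancl_hasse_graph_if_le:
  assumes "trans r" "antisym r" "finite C"
  shows "i \<in> C \<Longrightarrow> j \<in> C \<Longrightarrow> (i, j) \<in> r \<Longrightarrow> (i, j) \<in> (hasse_graph r C)\<^sup>*"
proof (induction "card {k\<in>C. strict_lt r i k \<and> strict_lt r k j}" arbitrary: i j rule: less_induct)
  case less
  let ?between = "\<lambda>a b. {k\<in>C. strict_lt r a k \<and> strict_lt r k b}"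
  show ?case
  proof (cases "?between i j = {}")
    case True
    then have "i = j \<or> cover_in r C i j"
      using less.prems by (auto simp: cover_in_def strict_lt_def)
    then show ?thesis
      by (auto simp: hasse_graph_def)
  next
    case False
    then obtain k where k: "k \<in> C" "strict_lt r i k" "strict_lt r k j"
      by blast
    have trans: "(a, c) \<in> r" if "(a, b) \<in> r" "(b, c) \<in> r" for a b c
      using assms(1) that by (rule transD)
    have antisym: "a = b" if "(a, b) \<in> r" "(b, a) \<in> r" for a b
      using assms(2) that by (rule antisymD)
    have "?between i k \<subset> ?between i j" "?between k j \<subset> ?between i j"
      using k trans antisym unfolding strict_lt_def by blast+
    then have "card (?between i k) < card (?between i j)" "card (?between k j) < card (?between i j)"
      using assms(3) by (simp_all add: psubset_card_mono)
    then have "(i, k) \<in> (hasse_graph r C)\<^sup>*" "(k, j) \<in> (hasse_graph r C)\<^sup>*"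
      using less.hyps less.prems k by (auto simp: strict_lt_def)
    then show ?thesis
      by (rule rtrancl_trans)
  qed
qed

definition comparability_component :: "nat rel \<Rightarrow> nat set \<Rightarrow> nat \<Rightarrow> nat set" where
  "comparability_component r U x =
     {y. (x, y) \<in> {(a, b). a \<in> U \<and> b \<in> U \<and> ((a, b) \<in> r \<or> (b, a) \<in> r)}\<^sup>*}"

lemma self_in_comparability_component: "x \<in> comparability_component r U x"
  by (simp add: comparability_component_def)

lemma comparability_component_subset: "x \<in> U \<Longrightarrow> comparability_component r U x \<subseteq> U"
  unfolding comparability_component_def
  by (auto elim: rtrancl_induct)

lemma comparability_closed_component:
  assumes "x \<in> U"
  shows "comparability_closed r U (comparability_component r U x)"
  unfolding comparability_closed_def
proof (intro ballI impI)
  fix u v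
  assume u: "u \<in> comparability_component r U x" and "v \<in> U" "(u, v) \<in> r \<or> (v, u) \<in> r"
  moreover have "u \<in> U"
    using u comparability_component_subset[OF assms] by blast
  ultimately show "v \<in> comparability_component r U x"
    unfolding comparability_component_def by (auto intro: rtrancl_into_rtrancl)
qed

lemma down_closed_component:
  assumes "down_closed r U" "x \<in> U"
  shows "down_closed r (comparability_component r U x)"
  unfolding down_closed_def
proof (intro allI impI)
  fix i j assume "j \<in> comparability_component r U x \<and> (i, j) \<in> r"
  moreover have "i \<in> U"
    using calculation comparability_component_subset[OF assms(2)] assms(1)
    unfolding down_closed_def by blast
  ultimately show "i \<in> comparability_component r U x"
    using comparability_closed_component[OF assms(2)] unfolding comparability_closed_def by blast
qed

lemma hasse_connected_component:
  assumes "trans r" "antisym r" "finite U" "x \<in> U"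
  shows "hasse_connected r (comparability_component r U x)"
proof -
  let ?C = "comparability_component r U x"
  let ?H = "(hasse_graph r ?C)\<^sup>*"
  have finite: "finite ?C"
    using comparability_component_subset[OF assms(4)] assms(3) by (rule finite_subset)
  have comparable: "(y, z) \<in> ?H" if "y \<in> ?C" "z \<in> ?C" "(y, z) \<in> r \<or> (z, y) \<in> r" for y z
    using that rtrancl_hasse_graph_if_le[OF assms(1,2) finite] sym_rtrancl_hasse_graph
    by (meson symD)
  have from_x: "(x, y) \<in> ?H" if "y \<in> ?C" for y
  proof -
    have "(x, y) \<in> {(a, b). a \<in> U \<and> b \<in> U \<and> ((a, b) \<in> r \<or> (b, a) \<in> r)}\<^sup>*"
      using that by (simp add: comparability_component_def)
    then show ?thesis
    proof (induction rule: rtrancl_induct)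
      case (step y z)
      then have "y \<in> ?C" "z \<in> ?C"
        unfolding comparability_component_def by (auto intro: rtrancl_into_rtrancl)
      with step show ?case
        using comparable by (blast intro: rtrancl_trans)
    qed simp
  qed
  show ?thesis
    unfolding hasse_connected_iff
    using from_x sym_rtrancl_hasse_graph by (meson rtrancl_trans symD)
qed

lemma component_in_Jconn:
  assumes "poset_on n r" "U \<subseteq> {1..n}" "down_closed r U" "x \<in> U"
  shows "comparability_component r U x \<in> Jconn n r"
  using comparability_component_subset[OF assms(4)] assms self_in_comparability_component
    down_closed_component hasse_connected_component[OF poset_on_trans poset_on_antisym]
    finite_subset[OF assms(2)]
  unfolding Jconn_def by blast

lemma down_closed_keys_Aweak: "f \<in> Aweak n r \<Longrightarrow> down_closed r (Poly_Mapping.keys f)"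
  unfolding down_closed_def Aweak_def strict_lt_def
  by (metis (mono_tags, lifting) in_keys_iff le_zero_eq mem_Collect_eq)

lemma diff_chi_add_cancel:
  assumes "finite C" "C \<subseteq> Poly_Mapping.keys f"
  shows "f - chi C + chi C = f"
  by (rule poly_mapping_eqI) (use assms in \<open>auto simp: lookup_add lookup_minus lookup_chi in_keys_iff\<close>)

text \<open>If \<open>i <\<^sub>P j\<close> with \<open>i \<in> C\<close> and \<open>j \<notin> C\<close>, closedness puts \<open>j\<close> outside the support,
  so the value at \<open>j\<close> is zero on both sides of the subtraction.\<close>

lemma diff_chi_in_Aweak:
  assumes f: "f \<in> Aweak n r" and C: "finite C" "C \<subseteq> Poly_Mapping.keys f" "down_closed r C"
    "comparability_closed r (Poly_Mapping.keys f) C"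
  shows "f - chi C \<in> Aweak n r"
proof -
  have lookup_diff: "Poly_Mapping.lookup (f - chi C) y = Poly_Mapping.lookup f y - (if y \<in> C then 1 else 0)" for y
    by (simp add: lookup_minus lookup_chi C(1))
  have "Poly_Mapping.keys (f - chi C) \<subseteq> {1..n}"
    using f by (auto simp: Aweak_def in_keys_iff lookup_diff)
  moreover have "Poly_Mapping.lookup (f - chi C) j \<le> Poly_Mapping.lookup (f - chi C) i"
    if ij: "strict_lt r i j" for i j
  proof -
    have fij: "Poly_Mapping.lookup f j \<le> Poly_Mapping.lookup f i"
      using f ij by (simp add: Aweak_def)
    have "(i, j) \<in> r"
      using ij by (simp add: strict_lt_def)
    then have "j \<in> C \<Longrightarrow> i \<in> C" and "i \<in> C \<Longrightarrow> j \<notin> C \<Longrightarrow> j \<notin> Poly_Mapping.keys f"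
      using C(3,4) unfolding down_closed_def comparability_closed_def by blast+
    then show ?thesis
      using fij by (auto simp: lookup_diff in_keys_iff)
  qed
  ultimately show ?thesis
    by (simp add: Aweak_def)
qed

lemma peel_component:
  assumes "poset_on n r" "f \<in> Aweak n r" "x \<in> Poly_Mapping.keys f"
  obtains C where "C \<in> Jconn n r" "x \<in> C" "comparability_closed r (Poly_Mapping.keys f) C"
    "f - chi C \<in> Aweak n r" "f - chi C + chi C = f"
proof
  let ?C = "comparability_component r (Poly_Mapping.keys f) x"
  have "Poly_Mapping.keys f \<subseteq> {1..n}"
    using assms(2) by (simp add: Aweak_def)
  then show C_Jconn: "?C \<in> Jconn n r"
    using component_in_Jconn[OF assms(1) _ down_closed_keys_Aweak[OF assms(2)] assms(3)] by blast
  then have C_finite: "finite ?C" and C_down: "down_closed r ?C"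
    by (simp_all add: Jconn_finite) (simp add: Jconn_def)
  have C_sub: "?C \<subseteq> Poly_Mapping.keys f"
    using assms(3) by (rule comparability_component_subset)
  show C_closed: "comparability_closed r (Poly_Mapping.keys f) ?C"
    using assms(3) by (rule comparability_closed_component)
  show "x \<in> ?C"
    by (rule self_in_comparability_component)
  show "f - chi ?C \<in> Aweak n r"
    using assms(2) C_finite C_sub C_down C_closed by (rule diff_chi_in_Aweak)
  show "f - chi ?C + chi ?C = f"
    using C_finite C_sub by (rule diff_chi_add_cancel)
qed

lemma laminar_decomposition_exists:
  assumes "poset_on n r" "f \<in> Aweak n r"
  shows "\<exists>g. Poly_Mapping.keys g \<subseteq> Jconn n r \<and> laminar (Poly_Mapping.keys g) \<and> Sdeg g = f"
  using assms(2)
proof (induction "total_degree f" arbitrary: f rule: less_induct)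
  case less
  show ?case
  proof (cases "f = 0")
    case True
    then show ?thesis
      by (intro exI[of _ 0]) (simp add: laminar_def Sdeg_def)
  next
    case False
    then obtain x where x: "x \<in> Poly_Mapping.keys f"
      by (metis keys_eq_empty ex_in_conv)
    obtain C where C: "C \<in> Jconn n r" "x \<in> C" "comparability_closed r (Poly_Mapping.keys f) C"
      and f': "f - chi C \<in> Aweak n r" "f - chi C + chi C = f"
      using peel_component[OF assms(1) less.prems x] .
    have "Poly_Mapping.lookup (chi C) x = 1"
      using C(1,2) by (simp add: lookup_chi Jconn_finite)
    then have "chi C \<noteq> 0"
      by auto
    then have "total_degree (f - chi C) < total_degree f"
      using total_degree_add[of "f - chi C" "chi C"] by (simp add: f'(2))
    then obtain g' where g': "Poly_Mapping.keys g' \<subseteq> Jconn n r" "laminar (Poly_Mapping.keys g')"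
      "Sdeg g' = f - chi C"
      using less.hyps f'(1) by blast
    have "\<Union>(Poly_Mapping.keys g') = Poly_Mapping.keys (f - chi C)"
      using keys_Sdeg[of g'] g'(1,3) Jconn_finite by (metis subsetD)
    also have "\<dots> \<subseteq> Poly_Mapping.keys f"
      using keys_add_nat[of "f - chi C" "chi C"] unfolding f'(2) by blast
    finally have support: "\<Union>(Poly_Mapping.keys g') \<subseteq> Poly_Mapping.keys f" .
    have "J \<subseteq> C" if J: "J \<in> Poly_Mapping.keys g'" "J \<inter> C \<noteq> {}" for J
    proof -
      have "hasse_connected r J"
        using J(1) g'(1) by (auto simp: Jconn_def)
      then show ?thesis
        using hasse_connected_subset_if_meets[of r J "Poly_Mapping.keys f" C] J support C(3) by blast
    qed
    then have "laminar (insert C (Poly_Mapping.keys g'))"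
      by (rule laminar_insert[OF g'(2)])
    moreover have "Poly_Mapping.keys (g' + Poly_Mapping.single C 1) = insert C (Poly_Mapping.keys g')"
      by simp
    moreover have "Sdeg (g' + Poly_Mapping.single C 1) = f"
      using g'(3) f'(2) by (simp only: Sdeg_add Sdeg_single)
    ultimately show ?thesis
      using g'(1) C(1) by (metis insert_subset)
  qed
qed

lemma maximal_member_comparability_closed:
  assumes "\<And>J'. J' \<in> K \<Longrightarrow> down_closed r J'" "laminar K"
    and J: "J \<in> K" "\<And>J'. J' \<in> K \<Longrightarrow> J \<subseteq> J' \<Longrightarrow> J = J'"
  shows "comparability_closed r (\<Union>K) J"
  unfolding comparability_closed_def
proof (intro ballI impI)
  fix u v assume u: "u \<in> J" and "v \<in> \<Union>K" and uv: "(u, v) \<in> r \<or> (v, u) \<in> r"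
  then obtain J' where J': "J' \<in> K" "v \<in> J'"
    by blast
  from uv show "v \<in> J"
  proof
    assume "(v, u) \<in> r"
    then show ?thesis
      using assms(1)[OF J(1)] u by (auto simp: down_closed_def)
  next
    assume "(u, v) \<in> r"
    then have "u \<in> J'"
      using assms(1)[OF J'(1)] J'(2) by (auto simp: down_closed_def)
    then have "J \<subseteq> J' \<or> J' \<subseteq> J"
      using assms(2) J(1) J'(1) u unfolding laminar_def by blast
    then show ?thesis
      using J(2)[OF J'(1)] J'(2) by blast
  qed
qed

text \<open>A maximal member of a laminar decomposition is a connected component of the support of
  the decomposed vector, so it does not depend on the decomposition.\<close>

lemma maximal_member_in_laminar_decomposition:
  assumes g1: "Poly_Mapping.keys g1 \<subseteq> Jconn n r" "laminar (Poly_Mapping.keys g1)"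
    and g2: "Poly_Mapping.keys g2 \<subseteq> Jconn n r" "laminar (Poly_Mapping.keys g2)"
    and same: "Sdeg g1 = Sdeg g2"
    and J: "J \<in> Poly_Mapping.keys g1" "\<And>J'. J' \<in> Poly_Mapping.keys g1 \<Longrightarrow> J \<subseteq> J' \<Longrightarrow> J = J'"
  shows "J \<in> Poly_Mapping.keys g2"
proof -
  have union: "\<Union>(Poly_Mapping.keys g1) = \<Union>(Poly_Mapping.keys g2)"
    using keys_Sdeg[of g1] keys_Sdeg[of g2] g1(1) g2(1) same Jconn_finite by (metis subsetD)
  have down: "\<And>J'. J' \<in> Jconn n r \<Longrightarrow> down_closed r J'" and conn: "\<And>J'. J' \<in> Jconn n r \<Longrightarrow> hasse_connected r J'"
    by (simp_all add: Jconn_def)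
  obtain x where x: "x \<in> J"
    using J(1) g1(1) by (auto simp: Jconn_def)
  then obtain K0 where "K0 \<in> Poly_Mapping.keys g2" "x \<in> K0"
    using J(1) union by blast
  then obtain K where K: "K \<in> Poly_Mapping.keys g2" "x \<in> K"
    "\<And>K'. K' \<in> Poly_Mapping.keys g2 \<Longrightarrow> K \<subseteq> K' \<Longrightarrow> K = K'"
    using finite_has_maximal2[OF finite_keys, of K0 g2] by blast
  have J_closed: "comparability_closed r (\<Union>(Poly_Mapping.keys g1)) J"
    using maximal_member_comparability_closed[OF _ g1(2) J] g1(1) down by blast
  have K_closed: "comparability_closed r (\<Union>(Poly_Mapping.keys g2)) K"
    using maximal_member_comparability_closed[OF _ g2(2) K(1,3)] g2(1) down by blast
  have "K \<subseteq> J"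
    using hasse_connected_subset_if_meets[OF conn _ J_closed K(2) x] K(1) g2(1) union by blast
  moreover have "J \<subseteq> K"
    using hasse_connected_subset_if_meets[OF conn _ K_closed x K(2)] J(1) g1(1) union by blast
  ultimately show ?thesis
    using K(1) by simp
qed

lemma diff_single_add_cancel:
  "J \<in> Poly_Mapping.keys g \<Longrightarrow> g - Poly_Mapping.single J 1 + Poly_Mapping.single J (1::nat) = g"
  by (rule poly_mapping_eqI) (auto simp: lookup_add lookup_minus lookup_single when_def in_keys_iff)

lemma laminar_decomposition_unique:
  assumes "Poly_Mapping.keys g1 \<subseteq> Jconn n r" "laminar (Poly_Mapping.keys g1)"
    and "Poly_Mapping.keys g2 \<subseteq> Jconn n r" "laminar (Poly_Mapping.keys g2)"
    and "Sdeg g1 = Sdeg g2"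
  shows "g1 = g2"
  using assms
proof (induction "total_degree g1" arbitrary: g1 g2 rule: less_induct)
  case less
  show ?case
  proof (cases "g1 = 0")
    case True
    then have "\<Union>(Poly_Mapping.keys g2) = {}"
      using less.prems(3,5) keys_Sdeg[of g2] Jconn_finite by (auto simp: Sdeg_def)
    then have "Poly_Mapping.keys g2 = {}"
      using less.prems(3) unfolding Jconn_def by blast
    then show ?thesis
      using True by simp
  next
    case False
    then obtain J where J: "J \<in> Poly_Mapping.keys g1" "\<And>J'. J' \<in> Poly_Mapping.keys g1 \<Longrightarrow> J \<subseteq> J' \<Longrightarrow> J = J'"
      using finite_has_maximal[OF finite_keys, of g1] by auto
    have J2: "J \<in> Poly_Mapping.keys g2"
      using maximal_member_in_laminar_decomposition[OF less.prems J] .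
    define g1' where "g1' = g1 - Poly_Mapping.single J 1"
    define g2' where "g2' = g2 - Poly_Mapping.single J 1"
    have g1: "g1 = g1' + Poly_Mapping.single J 1" and g2: "g2 = g2' + Poly_Mapping.single J 1"
      unfolding g1'_def g2'_def using diff_single_add_cancel J(1) J2 by metis+
    have "total_degree g1 = total_degree g1' + total_degree (Poly_Mapping.single J (1::nat))"
      by (subst g1) (rule total_degree_add)
    then have "total_degree g1' < total_degree g1"
      by (simp flip: keys_eq_empty)
    moreover have "Poly_Mapping.keys g1' \<subseteq> Poly_Mapping.keys g1"
      by (subst g1) auto
    moreover have "Poly_Mapping.keys g2' \<subseteq> Poly_Mapping.keys g2"
      by (subst g2) auto
    moreover have "Sdeg g1' = Sdeg g2'"
      using less.prems(5) by (subst (asm) g1, subst (asm) g2) (simp add: Sdeg_add)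
    ultimately have "g1' = g2'"
      using less.hyps less.prems(1-4) laminar_subset by (metis subset_trans)
    then show ?thesis
      using g1 g2 by simp
  qed
qed

lemma card_laminar_decompositions:
  assumes "poset_on n r"
  shows "card {g. Poly_Mapping.keys g \<subseteq> Jconn n r \<and> laminar (Poly_Mapping.keys g) \<and> Sdeg g = f}
           = (if f \<in> Aweak n r then 1 else 0)"
proof (cases "f \<in> Aweak n r")
  case True
  then obtain g where g: "Poly_Mapping.keys g \<subseteq> Jconn n r" "laminar (Poly_Mapping.keys g)" "Sdeg g = f"
    using laminar_decomposition_exists[OF assms] by blast
  then have "{g. Poly_Mapping.keys g \<subseteq> Jconn n r \<and> laminar (Poly_Mapping.keys g) \<and> Sdeg g = f} = {g}"
    using laminar_decomposition_unique by blast
  then show ?thesis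
    using True by simp
next
  case False
  then have none: "{g. Poly_Mapping.keys g \<subseteq> Jconn n r \<and> laminar (Poly_Mapping.keys g) \<and> Sdeg g = f} = {}"
    using Sdeg_in_Aweak by blast
  show ?thesis
    unfolding none using False by simp
qed

lemma finite_bounded_poly_mappings:
  assumes "finite A"
  shows "finite {g :: 'a \<Rightarrow>\<^sub>0 nat. Poly_Mapping.keys g \<subseteq> A \<and> (\<forall>a. Poly_Mapping.lookup g a \<le> N)}"
    (is "finite ?G")
proof (rule inj_on_finite)
  show "inj_on (\<lambda>g. restrict (Poly_Mapping.lookup g) A) ?G"
  proof (rule inj_onI)
    fix g h
    assume gh: "g \<in> ?G" "h \<in> ?G" and eq: "restrict (Poly_Mapping.lookup g) A = restrict (Poly_Mapping.lookup h) A"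
    show "g = h"
    proof (rule poly_mapping_eqI)
      fix a
      show "Poly_Mapping.lookup g a = Poly_Mapping.lookup h a"
      proof (cases "a \<in> A")
        case True
        then show ?thesis
          using eq by (metis restrict_apply')
      next
        case False
        then have "a \<notin> Poly_Mapping.keys g" "a \<notin> Poly_Mapping.keys h"
          using gh by auto
        then show ?thesis
          by (simp add: in_keys_iff)
      qed
    qed
  qed
  show "(\<lambda>g. restrict (Poly_Mapping.lookup g) A) ` ?G \<subseteq> PiE A (\<lambda>_. {..N})"
    by auto
  show "finite (PiE A (\<lambda>_. {..N}))"
    using assms by (simp add: finite_PiE)
qed

lemma finite_Jconn: "finite (Jconn n r)"
  by (rule finite_subset[of _ "Pow {1..n}"]) (auto simp: Jconn_def)

lemma finite_Sdeg_fibre: "finite {g. Poly_Mapping.keys g \<subseteq> Jconn n r \<and> Sdeg g = f}"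
proof (rule finite_subset)
  show "{g. Poly_Mapping.keys g \<subseteq> Jconn n r \<and> Sdeg g = f} \<subseteq>
      {g. Poly_Mapping.keys g \<subseteq> Jconn n r \<and> (\<forall>J. Poly_Mapping.lookup g J \<le> total_degree f)}"
  proof
    fix g assume "g \<in> {g. Poly_Mapping.keys g \<subseteq> Jconn n r \<and> Sdeg g = f}"
    then have g: "Poly_Mapping.keys g \<subseteq> Jconn n r" and f: "Sdeg g = f"
      by auto
    have "Poly_Mapping.lookup g J \<le> total_degree f" for J
    proof (cases "J \<in> Poly_Mapping.keys g")
      case True
      then obtain x where "x \<in> J"
        using g by (auto simp: Jconn_def)
      then have "Poly_Mapping.lookup g J \<le> Poly_Mapping.lookup (Sdeg g) x"
        using g Jconn_finite by (intro lookup_le_lookup_Sdeg) blast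
      then show ?thesis
        using lookup_le_total_degree[of f x] f by simp
    qed (simp add: in_keys_iff)
    with g show "g \<in> {g. Poly_Mapping.keys g \<subseteq> Jconn n r \<and> (\<forall>J. Poly_Mapping.lookup g J \<le> total_degree f)}"
      by simp
  qed
  show "finite {g. Poly_Mapping.keys g \<subseteq> Jconn n r \<and> (\<forall>J. Poly_Mapping.lookup g J \<le> total_degree f)}"
    using finite_Jconn by (rule finite_bounded_poly_mappings)
qed

section \<open>The ring \<open>S/I^init_P\<close>\<close>

lemma Sring_eq: "Sring n r = supported_in {g. Poly_Mapping.keys g \<subseteq> Jconn n r}"
  by (simp add: Sring_def supported_in_def subset_eq)

lemma Uvar_mult: "Uvar J1 * Uvar J2 = monom (Poly_Mapping.single J1 1 + Poly_Mapping.single J2 1)"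
  by (simp add: Uvar_def monom_mult)

lemma Pi_pairs_iff:
  "{J1, J2} \<in> Pi_pairs n r \<longleftrightarrow>
     J1 \<in> Jconn n r \<and> J2 \<in> Jconn n r \<and> J1 \<inter> J2 \<noteq> {} \<and> \<not> J1 \<subseteq> J2 \<and> \<not> J2 \<subseteq> J1"
  unfolding Pi_pairs_def by (auto simp: doubleton_eq_iff)

lemma not_laminar_iff_Pi_pairs:
  assumes "K \<subseteq> Jconn n r"
  shows "\<not> laminar K \<longleftrightarrow> (\<exists>J1\<in>K. \<exists>J2\<in>K. {J1, J2} \<in> Pi_pairs n r)"
  using assms unfolding laminar_def Pi_pairs_iff by blast

lemma Iinit_generator_nonlaminar:
  assumes s: "s \<in> Sring n r" and J: "{J1, J2} \<in> Pi_pairs n r"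
  shows "s * (Uvar J1 * Uvar J2)
    \<in> supported_in {g. Poly_Mapping.keys g \<subseteq> Jconn n r \<and> \<not> laminar (Poly_Mapping.keys g)}"
  unfolding Uvar_mult
proof (rule mult_in_supported_in)
  show "s \<in> supported_in {g. Poly_Mapping.keys g \<subseteq> Jconn n r}"
    using s by (simp add: Sring_eq)
  show "monom (Poly_Mapping.single J1 1 + Poly_Mapping.single J2 1)
      \<in> supported_in {Poly_Mapping.single J1 1 + Poly_Mapping.single J2 1}"
    by simp
  fix g h :: "nat set \<Rightarrow>\<^sub>0 nat"
  assume "g \<in> {g. Poly_Mapping.keys g \<subseteq> Jconn n r}"
    and "h \<in> {Poly_Mapping.single J1 1 + Poly_Mapping.single J2 1}"
  then have "Poly_Mapping.keys (g + h) = Poly_Mapping.keys g \<union> {J1, J2}"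
    and "Poly_Mapping.keys g \<subseteq> Jconn n r"
    by auto
  then show "g + h \<in> {g. Poly_Mapping.keys g \<subseteq> Jconn n r \<and> \<not> laminar (Poly_Mapping.keys g)}"
    using J not_laminar_iff_Pi_pairs[of "Poly_Mapping.keys (g + h)" n r] by (auto simp: Pi_pairs_iff)
qed

lemma monom_nonlaminar_factor:
  assumes g: "Poly_Mapping.keys g \<subseteq> Jconn n r" "\<not> laminar (Poly_Mapping.keys g)"
  obtains b J1 J2 where "(monom g :: (nat set, 'k::field) mpoly) = monom b * (Uvar J1 * Uvar J2)"
    "(monom b :: (nat set, 'k) mpoly) \<in> Sring n r" "{J1, J2} \<in> Pi_pairs n r"
proof -
  obtain J1 J2 where J: "J1 \<in> Poly_Mapping.keys g" "J2 \<in> Poly_Mapping.keys g" "{J1, J2} \<in> Pi_pairs n r"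
    using g not_laminar_iff_Pi_pairs by blast
  then have "J1 \<noteq> J2"
    by (auto simp: Pi_pairs_iff)
  define b where "b = g - Poly_Mapping.single J1 1 - Poly_Mapping.single J2 1"
  have "g = b + (Poly_Mapping.single J1 1 + Poly_Mapping.single J2 1)"
    unfolding b_def using J(1,2) \<open>J1 \<noteq> J2\<close>
    by (intro poly_mapping_eqI) (auto simp: lookup_add lookup_minus lookup_single when_def in_keys_iff)
  then have "(monom g :: (nat set, 'k) mpoly) = monom b * (Uvar J1 * Uvar J2)"
    by (simp add: Uvar_mult monom_mult)
  moreover have "(monom b :: (nat set, 'k) mpoly) \<in> Sring n r"
    using g(1) J(1,2) keys_diff[of g "Poly_Mapping.single J1 1"]
      keys_diff[of "g - Poly_Mapping.single J1 1" "Poly_Mapping.single J2 1"]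
    unfolding Sring_eq b_def by auto
  ultimately show ?thesis
    using J(3) that by blast
qed

lemma Iinit_eq:
  "(Iinit n r :: (nat set, 'k::field) mpoly set)
     = supported_in {g. Poly_Mapping.keys g \<subseteq> Jconn n r \<and> \<not> laminar (Poly_Mapping.keys g)}"
  (is "_ = supported_in ?N")
proof
  show "(Iinit n r :: (nat set, 'k) mpoly set) \<subseteq> supported_in ?N"
    unfolding Iinit_def kspan_eq_span
    by (rule vs.span_minimal[OF _ subspace_supported_in]) (auto intro: Iinit_generator_nonlaminar)
  have "(monom ` ?N :: (nat set, 'k) mpoly set)
      \<subseteq> {s * (Uvar J1 * Uvar J2) |s J1 J2. s \<in> Sring n r \<and> {J1, J2} \<in> Pi_pairs n r}"
    by (auto elim!: monom_nonlaminar_factor)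
  then show "supported_in ?N \<subseteq> (Iinit n r :: (nat set, 'k) mpoly set)"
    unfolding Iinit_def kspan_eq_span span_monoms[symmetric] by (rule vs.span_mono)
qed

lemma compS_supported_in: "compS (supported_in G) f = supported_in {g \<in> G. Sdeg g = f}"
  by (auto simp: compS_def supported_in_def)

lemma hilb_SI_eq:
  assumes "poset_on n r"
  shows "hilb_SI TYPE('k::field) n r f = (if f \<in> Aweak n r then 1 else 0)"
proof -
  let ?all = "{g. Poly_Mapping.keys g \<subseteq> Jconn n r \<and> Sdeg g = f}"
  let ?nonlaminar = "{g. Poly_Mapping.keys g \<subseteq> Jconn n r \<and> \<not> laminar (Poly_Mapping.keys g) \<and> Sdeg g = f}"
  have finite: "finite ?all" "finite ?nonlaminar"
    using finite_Sdeg_fibre[of n r f] by (auto intro: rev_finite_subset)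
  have "hilb_SI TYPE('k) n r f = card ?all - card ?nonlaminar"
    using dim_supported_in[where 'k = 'k, OF finite(1)] dim_supported_in[where 'k = 'k, OF finite(2)]
    by (simp add: hilb_SI_def kdim_eq_dim Sring_eq Iinit_eq compS_supported_in conj_assoc)
  also have "\<dots> = card (?all - ?nonlaminar)"
    using finite by (simp add: card_Diff_subset subset_eq)
  also have "?all - ?nonlaminar = {g. Poly_Mapping.keys g \<subseteq> Jconn n r \<and> laminar (Poly_Mapping.keys g) \<and> Sdeg g = f}"
    by blast
  finally show ?thesis
    using card_laminar_decompositions[OF assms] by simp
qed

theorem proposition6p2:
  fixes n :: nat and r :: "nat rel"
  assumes "poset_on n r"
  shows "\<forall>f. Poly_Mapping.keys f \<subseteq> {1..n} \<longrightarrow>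
           hilb_RP TYPE('k::field) n r f = (if f \<in> Aweak n r then 1 else 0) \<and>
           hilb_gr TYPE('k) n r f = (if f \<in> Aweak n r then 1 else 0) \<and>
           hilb_SI TYPE('k) n r f = (if f \<in> Aweak n r then 1 else 0)"
  using hilb_RP_eq hilb_gr_eq hilb_SI_eq[OF assms] by blast

end
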